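(* Let $n\ge1$ and $s\ge1$ be integers and let $\mathcal{E}$ be a nonempty subset of $\{1,\dots,s\}$ (the parity-check equation of an $(n,n-1)$ convolutional code), represented by the binary vector $b_1\dots b_s$ with $b_i=1$ iff $i\in\mathcal{E}$. For a finite set $\mathcal{F}$ of integers write $\tilde{\mathcal{G}}^{\mathcal{F}}_2$ for the labelled neighbourhood graph at distance two of $\mathcal{F}$ (defined in the context). Then: (1) if $\mathcal{E}'$ is the set represented by the reversed vector $b_s\dots b_1$ (i.e. $\mathcal{E}'=\{s+1-e: e\in\mathcal{E}\}$), the labelled graphs $\tilde{\mathcal{G}}^{\mathcal{E}'}_2$ and $\tilde{\mathcal{G}}^{\mathcal{E}}_2$ are equivalent; (2) if moreover $s$ is a multiple of $n$, then for every permutation $p$ of $\{1,\dots,n\}$, if $\mathcal{E}'$ is the set represented by the vector $p(b_1\dots b_n)\,p(b_{n+1}\dots b_{2n})\cdots p(b_{s-n+1}\dots b_s)$, obtained by applying the same permutation $p$ to the coordinates inside each consecutive block of length $n$, then $\tilde{\mathcal{G}}^{\mathcal{E}'}_2$ and $\tilde{\mathcal{G}}^{\mathcal{E}}_2$ are equivalent.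
   Context: For a finite set $\mathcal{F}$ of integers and $i\in\mathbb{Z}$ let $\mathcal{F}^{(i)}=\{f+in: f\in\mathcal{F}\}$. The labelled graph of a set $\mathcal{L}$ of such sets has one vertex per element of $\mathcal{L}$, and for two distinct elements $\mathcal{A},\mathcal{B}$ and each position $p\in\mathcal{A}\cap\mathcal{B}$ there is an edge between them labelled $p$. Take $\mathcal{L}=\{\mathcal{F}^{(i)}:i\in\mathbb{Z}\}$; let $V_1$ be the vertices $\mathcal{F}^{(i)}$ with $\mathcal{F}^{(i)}\cap\mathcal{F}\neq\emptyset$ (including $\mathcal{F}$), and let $\tilde{\mathcal{G}}^{\mathcal{F}}_2$ be the labelled subgraph induced by $V_1$ together with all vertices having an edge to a vertex of $V_1$. Two graphs are isomorphic if there is a bijection $\phi$ between their vertex sets such that every pair $(x,y)$ has as many edges between $x,y$ as between $\phi(x),\phi(y)$. Two labelled graphs are equivalent if they are isomorphic via some $\phi$ and there is a bijection $\psi$ from the labels of the first to the labels of the second such that for every pair of vertices $(x,y)$, if the multiset of labels of edges between $x$ and $y$ is $\{a_1,\dots,a_k\}$, then the multiset of labels of edges between $\phi(x)$ and $\phi(y)$ is $\{\psi(a_1),\dots,\psi(a_k)\}$. *)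

theory Defs
  imports Main "HOL-Library.Multiset" "HOL-Combinatorics.Permutations"
begin

definition shiftF :: "int \<Rightarrow> int set \<Rightarrow> int \<Rightarrow> int set" where
  "shiftF n F i = (\<lambda>f. f + i * n) ` F"

definition Lfam :: "int \<Rightarrow> int set \<Rightarrow> int set set" where
  "Lfam n F = range (shiftF n F)"

definition V1 :: "int \<Rightarrow> int set \<Rightarrow> int set set" where
  "V1 n F = {A \<in> Lfam n F. A \<inter> F \<noteq> {}}"

definition G2_verts :: "int \<Rightarrow> int set \<Rightarrow> int set set" where
  "G2_verts n F = V1 n F \<union> {B \<in> Lfam n F. \<exists>A \<in> V1 n F. A \<noteq> B \<and> A \<inter> B \<noteq> {}}"

definition int_edges :: "int set \<Rightarrow> int set \<Rightarrow> int multiset" where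
  "int_edges A B = (if A = B then {#} else mset_set (A \<inter> B))"

text \<open>A labelled (multi)graph is given by a vertex set V and a function E assigning to each
  pair of vertices the multiset of labels of edges between them. Its label set:\<close>
definition graph_labels :: "'v set \<Rightarrow> ('v \<Rightarrow> 'v \<Rightarrow> 'l multiset) \<Rightarrow> 'l set" where
  "graph_labels V E = (\<Union>x\<in>V. \<Union>y\<in>V. set_mset (E x y))"

definition lgraph_equiv ::
  "'v set \<Rightarrow> ('v \<Rightarrow> 'v \<Rightarrow> 'l multiset) \<Rightarrow> 'w set \<Rightarrow> ('w \<Rightarrow> 'w \<Rightarrow> 'm multiset) \<Rightarrow> bool" where
  "lgraph_equiv V E V' E' \<longleftrightarrow>
     (\<exists>\<phi> \<psi>. bij_betw \<phi> V V' \<and> bij_betw \<psi> (graph_labels V E) (graph_labels V' E') \<and>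
        (\<forall>x\<in>V. \<forall>y\<in>V. size (E x y) = size (E' (\<phi> x) (\<phi> y)) \<and>
                       E' (\<phi> x) (\<phi> y) = image_mset \<psi> (E x y)))"

definition G2_equiv :: "int \<Rightarrow> int set \<Rightarrow> int set \<Rightarrow> bool" where
  "G2_equiv n F F' = lgraph_equiv (G2_verts n F) int_edges (G2_verts n F') int_edges"

text \<open>Blockwise permutation: position k*n + t (1 \<le> t \<le> n) is moved to k*n + p t.\<close>
definition block_perm :: "int \<Rightarrow> (int \<Rightarrow> int) \<Rightarrow> int set \<Rightarrow> int set" where
  "block_perm n p E = (\<lambda>e. ((e - 1) div n) * n + p ((e - 1) mod n + 1)) ` E"

end

theory Submission
  imports Defs
begin

text \<open>Both transformations of the parity-check equation are induced by bijections \<open>g\<close> of \<open>\<int>\<close>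
  that commute with translation by multiples of \<open>n\<close> up to a bijective reindexing of the
  multiples: the reversal \<open>e \<mapsto> s + 1 - e\<close> turns \<open>e + i n\<close> into \<open>g e - i n\<close>, and a blockwise
  permutation turns it into \<open>g e + i n\<close>. Such a \<open>g\<close> maps each translate of \<open>\<F>\<close> onto a translate
  of \<open>g(\<F>)\<close>, so \<open>A \<mapsto> g(A)\<close> is a vertex bijection between the two neighbourhood graphs, and
  since it maps intersections to intersections, \<open>g\<close> itself relabels the edges.\<close>

lemma image_Int_empty_iff: "inj g \<Longrightarrow> g ` A \<inter> g ` B = {} \<longleftrightarrow> A \<inter> B = {}"
  by (simp add: image_Int[symmetric])

lemma image_Collect_Bex:
  assumes "\<And>x y. R (f x) (f y) \<longleftrightarrow> R x y"
  shows "f ` {y \<in> S. \<exists>x \<in> T. R x y} = {y \<in> f ` S. \<exists>x \<in> f ` T. R x y}"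
  using assms by fastforce

lemma V1_image:
  assumes g: "inj g" and L: "image g ` Lfam n F = Lfam n F'" and F: "g ` F = F'"
  shows "image g ` V1 n F = V1 n F'"
proof -
  have "image g ` V1 n F = {A \<in> image g ` Lfam n F. A \<inter> g ` F \<noteq> {}}"
    unfolding V1_def using image_Int_empty_iff[OF g] by auto
  then show ?thesis unfolding V1_def L F .
qed

lemma G2_verts_image:
  assumes g: "inj g" and L: "image g ` Lfam n F = Lfam n F'" and F: "g ` F = F'"
  shows "image g ` G2_verts n F = G2_verts n F'"
proof -
  have "image g ` {B \<in> Lfam n F. \<exists>A \<in> V1 n F. A \<noteq> B \<and> A \<inter> B \<noteq> {}} =
      {B \<in> image g ` Lfam n F. \<exists>A \<in> image g ` V1 n F. A \<noteq> B \<and> A \<inter> B \<noteq> {}}"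
    by (rule image_Collect_Bex) (simp add: inj_image_eq_iff[OF g] image_Int_empty_iff[OF g])
  then show ?thesis unfolding G2_verts_def image_Un L V1_image[OF assms] by simp
qed

lemma int_edges_image:
  assumes g: "inj g"
  shows "int_edges (g ` A) (g ` B) = image_mset g (int_edges A B)"
  using g by (simp add: int_edges_def inj_image_eq_iff image_Int[symmetric]
      image_mset_mset_set[OF inj_on_subset[OF g subset_UNIV]])

lemma G2_equiv_if_inj_image:
  assumes g: "inj g" and L: "image g ` Lfam n F = Lfam n F'" and F: "g ` F = F'"
  shows "G2_equiv n F F'"
proof -
  have verts: "image g ` G2_verts n F = G2_verts n F'"
    using G2_verts_image[OF assms] .
  have labels: "graph_labels (G2_verts n F') int_edges = g ` graph_labels (G2_verts n F) int_edges"
    unfolding graph_labels_def verts[symmetric] by (auto simp: int_edges_image[OF g])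
  have "inj (image g)"
    by (rule injI) (simp add: inj_image_eq_iff[OF g])
  then have "bij_betw (image g) (G2_verts n F) (G2_verts n F')"
    using verts by (metis bij_betw_def inj_on_subset subset_UNIV)
  moreover have "bij_betw g (graph_labels (G2_verts n F) int_edges) (graph_labels (G2_verts n F') int_edges)"
    using labels g by (metis bij_betw_def inj_on_subset subset_UNIV)
  ultimately show ?thesis
    unfolding G2_equiv_def lgraph_equiv_def
    by (intro exI[of _ "image g"] exI[of _ g] conjI ballI) (simp_all add: int_edges_image[OF g])
qed

lemma Lfam_image:
  assumes shift: "\<And>e i. g (e + i * n) = g e + h i * n" and h: "surj h"
  shows "image g ` Lfam n F = Lfam n (g ` F)"
proof -
  have "image g (shiftF n F i) = shiftF n (g ` F) (h i)" for i
    unfolding shiftF_def image_image shift ..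
  then have "image g ` Lfam n F = shiftF n (g ` F) ` range h"
    unfolding Lfam_def image_image by simp
  then show ?thesis using h unfolding Lfam_def by simp
qed

lemma G2_equiv_image:
  assumes "inj g" and "\<And>e i. g (e + i * n) = g e + h i * n" and "surj h"
  shows "G2_equiv n F (g ` F)"
  using G2_equiv_if_inj_image[OF \<open>inj g\<close> Lfam_image[OF assms(2,3)] refl] .

lemma G2_equiv_reflect: "G2_equiv n ((\<lambda>e. c - e) ` F) F"
proof -
  have "G2_equiv n ((\<lambda>e. c - e) ` F) ((\<lambda>e. c - e) ` (\<lambda>e. c - e) ` F)"
    by (rule G2_equiv_image[where h = uminus]) (auto simp: inj_def surj_def intro: exI[of _ "- y" for y])
  then show ?thesis by (simp add: image_image)
qed

definition block_perm_map :: "int \<Rightarrow> (int \<Rightarrow> int) \<Rightarrow> int \<Rightarrow> int" where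
  "block_perm_map n q e = ((e - 1) div n) * n + q ((e - 1) mod n + 1)"

lemma block_perm_eq_image: "block_perm n q E = block_perm_map n q ` E"
  unfolding block_perm_def block_perm_map_def ..

lemma block_perm_map_shift: "block_perm_map n q (e + i * n) = block_perm_map n q e + i * n"
proof (cases "n = 0")
  case False
  have shifted: "e + i * n - 1 = (e - 1) + i * n" by simp
  have "(e + i * n - 1) div n = (e - 1) div n + i"
    unfolding shifted using div_mult_self1[OF False, of "e - 1" i] by simp
  moreover have "(e + i * n - 1) mod n = (e - 1) mod n"
    unfolding shifted by (rule mod_mult_self1)
  ultimately show ?thesis unfolding block_perm_map_def by (simp add: distrib_right)
qed simp

lemma block_perm_map_comp:
  assumes n: "n \<ge> 1" and r: "\<And>t. t \<in> {1..n} \<Longrightarrow> r t \<in> {1..n}"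
  shows "block_perm_map n q (block_perm_map n r e) = block_perm_map n (q \<circ> r) e"
proof -
  define k t where "k = (e - 1) div n" and "t = (e - 1) mod n + 1"
  have "0 \<le> (e - 1) mod n" "(e - 1) mod n < n" using n by simp_all
  then have "t \<in> {1..n}" unfolding t_def by simp
  then have rt: "0 \<le> r t - 1" "r t - 1 < n" using r[of t] by auto
  have shifted: "block_perm_map n r e - 1 = (r t - 1) + k * n"
    unfolding block_perm_map_def k_def t_def by simp
  have "(block_perm_map n r e - 1) div n = k"
    unfolding shifted using rt n by (simp add: div_pos_pos_trivial)
  moreover have "(block_perm_map n r e - 1) mod n = r t - 1"
    unfolding shifted using rt n by (simp add: mod_pos_pos_trivial)
  ultimately show ?thesis unfolding block_perm_map_def[of n q] by (simp add: block_perm_map_def k_def t_def)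
qed

lemma block_perm_map_id: "block_perm_map n id e = e"
  unfolding block_perm_map_def using div_mult_mod_eq[of "e - 1" n] by simp

lemma block_perm_map_inv_left:
  assumes "n \<ge> 1" and p: "p permutes {1..n}"
  shows "block_perm_map n (inv p) (block_perm_map n p e) = e"
  using block_perm_map_comp[OF assms(1), of p "inv p" e] permutes_in_image[OF p]
  by (simp only: permutes_inv_o(2)[OF p] block_perm_map_id)

lemma G2_equiv_block_perm:
  assumes n: "n \<ge> 1" and p: "p permutes {1..n}"
  shows "G2_equiv n (block_perm n p E) E"
proof -
  have "block_perm_map n p (block_perm_map n (inv p) e) = e" for e
    using block_perm_map_inv_left[OF n permutes_inv[OF p]] by (simp add: inv_inv_eq permutes_bij[OF p])
  then have "inj (block_perm_map n (inv p))"
    by (rule inj_on_inverseI)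
  then have "G2_equiv n (block_perm n p E) (block_perm_map n (inv p) ` block_perm n p E)"
    by (rule G2_equiv_image[where h = id]) (simp_all add: block_perm_map_shift)
  then show ?thesis
    by (simp add: block_perm_eq_image image_image block_perm_map_inv_left[OF n p])
qed

theorem mainTheorem2:
  fixes n s :: int and E :: "int set"
  assumes "n \<ge> 1" and "s \<ge> 1" and "E \<subseteq> {1..s}" and "E \<noteq> {}"
  shows "G2_equiv n ((\<lambda>e. s + 1 - e) ` E) E \<and>
         (n dvd s \<longrightarrow> (\<forall>p. p permutes {1..n} \<longrightarrow> G2_equiv n (block_perm n p E) E))"
  using G2_equiv_reflect[of n "s + 1" E] G2_equiv_block_perm[OF \<open>n \<ge> 1\<close>] by blast

end
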